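(* Let $\Sigma$ be a finite alphabet, $m,n$ positive integers with $m\le n$, and $r$ an $(m,n)$-ranker. There is a sentence $\varphi_r\in\mathrm{FO}^2_{m,n}[<]$ such that for all $w\in\Sigma^\star$, $w\models\varphi_r$ iff $r(w)$ is defined.
   Context: Words are finite structures with universe $\{1,\dots,|w|\}$, unary predicates $Q_a$ ($a\in\Sigma$) marking positions carrying $a$, and the order $<$. $\mathrm{FO}^2_n[<]$ is first-order logic over this signature using only the variables $x,y$, with quantifier depth at most $n$; $\mathrm{FO}^2_{m,n}[<]$ is the set of its formulas in which every path in the parse tree has at most $m$ blocks of alternating quantifiers. Boundary positions: $\triangleright_a(w)=\min\{i:w_i=a\}$, $\triangleleft_a(w)=\max\{i:w_i=a\}$, $\triangleright_a(w,q)=\min\{i\in[q+1,|w|]:w_i=a\}$, $\triangleleft_a(w,q)=\max\{i\in[1,q-1]:w_i=a\}$ (undefined if empty); $\triangleright,\triangleleft$ are directions. An $n$-ranker is a sequence $r=(p_1,\dots,p_n)$ of boundary positions with $r(w)=p_1(w)$ if $n=1$, undefined if $(p_1,\dots,p_{n-1})(w)$ is undefined, else $p_n(w,(p_1,\dots,p_{n-1})(w))$. An $(m,n)$-ranker is an $n$-ranker whose sequence of directions consists of exactly $m$ maximal blocks of equal direction. *)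

theory Defs
  imports Main
begin

text \<open>A word is a list; its positions are 1..length w, and position i carries w ! (i-1).\<close>

definition letter_at :: "'a list \<Rightarrow> nat \<Rightarrow> 'a" where
  "letter_at w i = w ! (i - 1)"

datatype var = VX | VY

datatype quant = QEx | QAll

text \<open>Formulas in negation normal form (negation only in front of atoms).\<close>
datatype 'a fo2 =
    FTrue | FFalse
  | Letter 'a var | NLetter 'a var
  | Less var var | NLess var var
  | Eq var var | NEq var var
  | And "'a fo2" "'a fo2" | Or "'a fo2" "'a fo2"
  | Ex var "'a fo2" | All var "'a fo2"

fun sat :: "'a list \<Rightarrow> (var \<Rightarrow> nat) \<Rightarrow> 'a fo2 \<Rightarrow> bool" where
  "sat w v FTrue = True"
| "sat w v FFalse = False"
| "sat w v (Letter a x) = (letter_at w (v x) = a)"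
| "sat w v (NLetter a x) = (letter_at w (v x) \<noteq> a)"
| "sat w v (Less x y) = (v x < v y)"
| "sat w v (NLess x y) = (\<not> v x < v y)"
| "sat w v (Eq x y) = (v x = v y)"
| "sat w v (NEq x y) = (v x \<noteq> v y)"
| "sat w v (And f g) = (sat w v f \<and> sat w v g)"
| "sat w v (Or f g) = (sat w v f \<or> sat w v g)"
| "sat w v (Ex x f) = (\<exists>i\<in>{1..length w}. sat w (v(x := i)) f)"
| "sat w v (All x f) = (\<forall>i\<in>{1..length w}. sat w (v(x := i)) f)"

fun free_vars :: "'a fo2 \<Rightarrow> var set" where
  "free_vars FTrue = {}"
| "free_vars FFalse = {}"
| "free_vars (Letter a x) = {x}"
| "free_vars (NLetter a x) = {x}"
| "free_vars (Less x y) = {x, y}"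
| "free_vars (NLess x y) = {x, y}"
| "free_vars (Eq x y) = {x, y}"
| "free_vars (NEq x y) = {x, y}"
| "free_vars (And f g) = free_vars f \<union> free_vars g"
| "free_vars (Or f g) = free_vars f \<union> free_vars g"
| "free_vars (Ex x f) = free_vars f - {x}"
| "free_vars (All x f) = free_vars f - {x}"

definition sentence :: "'a fo2 \<Rightarrow> bool" where
  "sentence f \<longleftrightarrow> free_vars f = {}"

text \<open>Truth of a sentence in a word (the valuation is irrelevant for sentences).\<close>
definition models :: "'a list \<Rightarrow> 'a fo2 \<Rightarrow> bool" where
  "models w f \<longleftrightarrow> sat w (\<lambda>_. 0) f"

fun qdepth :: "'a fo2 \<Rightarrow> nat" where
  "qdepth (And f g) = max (qdepth f) (qdepth g)"
| "qdepth (Or f g) = max (qdepth f) (qdepth g)"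
| "qdepth (Ex x f) = Suc (qdepth f)"
| "qdepth (All x f) = Suc (qdepth f)"
| "qdepth _ = 0"

text \<open>Maximal number of blocks of alternating quantifiers along a path of the parse tree;
  the first argument is the kind of the last quantifier seen above on the path.\<close>
fun qblocks_aux :: "quant option \<Rightarrow> 'a fo2 \<Rightarrow> nat" where
  "qblocks_aux q (And f g) = max (qblocks_aux q f) (qblocks_aux q g)"
| "qblocks_aux q (Or f g) = max (qblocks_aux q f) (qblocks_aux q g)"
| "qblocks_aux q (Ex x f) = (if q = Some QEx then 0 else 1) + qblocks_aux (Some QEx) f"
| "qblocks_aux q (All x f) = (if q = Some QAll then 0 else 1) + qblocks_aux (Some QAll) f"
| "qblocks_aux q _ = 0"

definition qblocks :: "'a fo2 \<Rightarrow> nat" where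
  "qblocks f = qblocks_aux None f"

definition FO2_mn :: "nat \<Rightarrow> nat \<Rightarrow> 'a fo2 set" where
  "FO2_mn m n = {f. qdepth f \<le> n \<and> qblocks f \<le> m}"

datatype dir = DRight | DLeft  \<comment> \<open>DRight = \<triangleright>, DLeft = \<triangleleft>\<close>

type_synonym 'a bpos = "dir \<times> 'a"
type_synonym 'a ranker = "'a bpos list"

definition opt_min :: "nat set \<Rightarrow> nat option" where
  "opt_min S = (if S = {} then None else Some (Min S))"

definition opt_max :: "nat set \<Rightarrow> nat option" where
  "opt_max S = (if S = {} then None else Some (Max S))"

fun bpos_abs :: "'a list \<Rightarrow> 'a bpos \<Rightarrow> nat option" where
  "bpos_abs w (DRight, a) = opt_min {i\<in>{1..length w}. letter_at w i = a}"
| "bpos_abs w (DLeft, a) = opt_max {i\<in>{1..length w}. letter_at w i = a}"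

fun bpos_rel :: "'a list \<Rightarrow> 'a bpos \<Rightarrow> nat \<Rightarrow> nat option" where
  "bpos_rel w (DRight, a) q = opt_min {i\<in>{q+1..length w}. letter_at w i = a}"
| "bpos_rel w (DLeft, a) q = opt_max {i\<in>{1..q-1}. letter_at w i = a}"

fun ranker_eval :: "'a list \<Rightarrow> 'a ranker \<Rightarrow> nat option" where
  "ranker_eval w [] = None"
| "ranker_eval w (p # ps) =
     foldl (\<lambda>acc q. Option.bind acc (bpos_rel w q)) (bpos_abs w p) ps"

definition dir_blocks :: "'a ranker \<Rightarrow> nat" where
  "dir_blocks r = length (remdups_adj (map fst r))"

definition is_mn_ranker :: "nat \<Rightarrow> nat \<Rightarrow> 'a ranker \<Rightarrow> bool" where
  "is_mn_ranker m n r \<longleftrightarrow> length r = n \<and> dir_blocks r = m"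

end

(*
  Read the ranker from its end.  Its last boundary position (d, a) selects the first a-position
  beyond, in direction d, the position q reached by the preceding prefix.  By induction on the
  prefix, for each direction k the property "x lies beyond q in direction k" is expressed by a
  formula whose only free variable is x, using the other variable for the quantified position.
  If k = d it says that some a-position lies beyond q and before x, which is one existential
  quantifier.  If k differs from d it says that some a-position lies beyond q and that every
  such position lies beyond x, which opens a universal block.  Hence every boundary position
  costs one quantifier, and a new block starts exactly where the direction changes.
*)

theory Submission
  imports Defs
begin

fun other_var :: "var \<Rightarrow> var" where
  "other_var VX = VY"
| "other_var VY = VX"

lemma other_var_neq [simp]: "other_var z \<noteq> z" "z \<noteq> other_var z"
  by (cases z; simp)+

fun fo_neg :: "'a fo2 \<Rightarrow> 'a fo2" where
  "fo_neg FTrue = FFalse"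
| "fo_neg FFalse = FTrue"
| "fo_neg (Letter a x) = NLetter a x"
| "fo_neg (NLetter a x) = Letter a x"
| "fo_neg (Less x y) = NLess x y"
| "fo_neg (NLess x y) = Less x y"
| "fo_neg (Eq x y) = NEq x y"
| "fo_neg (NEq x y) = Eq x y"
| "fo_neg (And f g) = Or (fo_neg f) (fo_neg g)"
| "fo_neg (Or f g) = And (fo_neg f) (fo_neg g)"
| "fo_neg (Ex x f) = All x (fo_neg f)"
| "fo_neg (All x f) = Ex x (fo_neg f)"

lemma sat_fo_neg [simp]: "sat w v (fo_neg f) \<longleftrightarrow> \<not> sat w v f"
  by (induction f arbitrary: v) auto

lemma qdepth_fo_neg [simp]: "qdepth (fo_neg f) = qdepth f"
  by (induction f) auto

lemma free_vars_fo_neg [simp]: "free_vars (fo_neg f) = free_vars f"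
  by (induction f) auto

lemma qblocks_aux_fo_neg:
  "qblocks_aux (Some QEx) (fo_neg f) = qblocks_aux (Some QAll) f"
  "qblocks_aux (Some QAll) (fo_neg f) = qblocks_aux (Some QEx) f"
  by (induction f) auto

fun beyond :: "dir \<Rightarrow> nat \<Rightarrow> nat \<Rightarrow> bool" where
  "beyond DRight p i \<longleftrightarrow> p < i"
| "beyond DLeft p i \<longleftrightarrow> i < p"

lemma beyond_other_dir: "k \<noteq> d \<Longrightarrow> beyond k p i \<longleftrightarrow> beyond d i p"
  by (cases k; cases d) auto

lemma beyond_trans: "beyond d x y \<Longrightarrow> beyond d y z \<Longrightarrow> beyond d x z"
  by (cases d) auto

lemma not_beyond_iff: "\<not> beyond d x y \<longleftrightarrow> x = y \<or> beyond d y x"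
  by (cases d) auto

fun fo_beyond :: "dir \<Rightarrow> var \<Rightarrow> var \<Rightarrow> 'a fo2" where
  "fo_beyond DRight x y = Less x y"
| "fo_beyond DLeft x y = Less y x"

lemma fo_beyond_simps [simp]:
  "sat w v (fo_beyond d x y) \<longleftrightarrow> beyond d (v x) (v y)"
  "qdepth (fo_beyond d x y) = 0"
  "qblocks_aux q (fo_beyond d x y) = 0"
  "free_vars (fo_beyond d x y) = {x, y}"
  by (cases d; auto)+

lemma opt_min_eq_Some: "finite S \<Longrightarrow> opt_min S = Some s \<longleftrightarrow> s \<in> S \<and> (\<forall>i\<in>S. s \<le> i)"
  unfolding opt_min_def by (auto intro: Min_in Min_eqI)

lemma opt_max_eq_Some: "finite S \<Longrightarrow> opt_max S = Some s \<longleftrightarrow> s \<in> S \<and> (\<forall>i\<in>S. i \<le> s)"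
  unfolding opt_max_def by (auto intro: Max_in Max_eqI)

definition occurrences_beyond :: "'a list \<Rightarrow> dir \<Rightarrow> 'a \<Rightarrow> nat \<Rightarrow> nat set" where
  "occurrences_beyond w d a q = {i \<in> {1..length w}. letter_at w i = a \<and> beyond d q i}"

lemma bpos_rel_eq_opt:
  assumes "q \<le> length w + 1"
  shows "bpos_rel w (d, a) q = (case d of
    DRight \<Rightarrow> opt_min (occurrences_beyond w d a q) | DLeft \<Rightarrow> opt_max (occurrences_beyond w d a q))"
proof (cases d)
  case DRight
  then show ?thesis
    unfolding occurrences_beyond_def by (auto intro!: arg_cong[where f = opt_min])
next
  case DLeft
  with assms show ?thesis
    unfolding occurrences_beyond_def by (auto intro!: arg_cong[where f = opt_max])
qed

lemma finite_occurrences_beyond [simp]: "finite (occurrences_beyond w d a q)"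
  by (simp add: occurrences_beyond_def)

lemma bpos_rel_eq_Some:
  assumes "q \<le> length w + 1"
  shows "bpos_rel w (d, a) q = Some s \<longleftrightarrow>
    s \<in> occurrences_beyond w d a q \<and> (\<forall>i \<in> occurrences_beyond w d a q. \<not> beyond d i s)"
  unfolding bpos_rel_eq_opt[OF assms]
  by (cases d) (simp_all add: opt_min_eq_Some opt_max_eq_Some not_less)

lemma bpos_rel_eq_None:
  assumes "q \<le> length w + 1"
  shows "bpos_rel w (d, a) q = None \<longleftrightarrow> occurrences_beyond w d a q = {}"
  unfolding bpos_rel_eq_opt[OF assms] by (cases d) (simp_all add: opt_min_def opt_max_def)

lemma bpos_rel_beyond_before_iff:
  assumes "q \<le> length w + 1"
  shows "(\<exists>s. bpos_rel w (d, a) q = Some s \<and> beyond d s z) \<longleftrightarrow>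
    (\<exists>i \<in> occurrences_beyond w d a q. beyond d i z)"
proof
  assume "\<exists>s. bpos_rel w (d, a) q = Some s \<and> beyond d s z"
  then obtain s where "bpos_rel w (d, a) q = Some s" "beyond d s z" by blast
  then show "\<exists>i \<in> occurrences_beyond w d a q. beyond d i z"
    unfolding bpos_rel_eq_Some[OF assms] by blast
next
  assume "\<exists>i \<in> occurrences_beyond w d a q. beyond d i z"
  then obtain i where i: "i \<in> occurrences_beyond w d a q" "beyond d i z" by blast
  then obtain s where s: "bpos_rel w (d, a) q = Some s"
    using bpos_rel_eq_None[OF assms] by (cases "bpos_rel w (d, a) q") auto
  with i have "i = s \<or> beyond d s i"
    unfolding bpos_rel_eq_Some[OF assms] not_beyond_iff[symmetric] by blast
  with i(2) have "beyond d s z"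
    using beyond_trans by blast
  with s show "\<exists>s. bpos_rel w (d, a) q = Some s \<and> beyond d s z" by blast
qed

lemma bpos_rel_beyond_after_iff:
  assumes "q \<le> length w + 1"
  shows "(\<exists>s. bpos_rel w (d, a) q = Some s \<and> beyond d z s) \<longleftrightarrow>
    occurrences_beyond w d a q \<noteq> {} \<and> (\<forall>i \<in> occurrences_beyond w d a q. beyond d z i)"
proof
  assume "\<exists>s. bpos_rel w (d, a) q = Some s \<and> beyond d z s"
  then obtain s where s: "s \<in> occurrences_beyond w d a q"
    "\<forall>i \<in> occurrences_beyond w d a q. \<not> beyond d i s" "beyond d z s"
    unfolding bpos_rel_eq_Some[OF assms] by blast
  have "beyond d z i" if "i \<in> occurrences_beyond w d a q" for i
  proof -
    from that s(2) have "i = s \<or> beyond d s i" by (simp add: not_beyond_iff[symmetric])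
    with s(3) show ?thesis
      using beyond_trans by blast
  qed
  with s(1) show "occurrences_beyond w d a q \<noteq> {} \<and> (\<forall>i \<in> occurrences_beyond w d a q. beyond d z i)"
    by blast
next
  assume *: "occurrences_beyond w d a q \<noteq> {} \<and> (\<forall>i \<in> occurrences_beyond w d a q. beyond d z i)"
  then obtain s where "bpos_rel w (d, a) q = Some s"
    using bpos_rel_eq_None[OF assms] by (cases "bpos_rel w (d, a) q") auto
  with * show "\<exists>s. bpos_rel w (d, a) q = Some s \<and> beyond d z s"
    unfolding bpos_rel_eq_Some[OF assms] by blast
qed

text \<open>The first boundary position is taken relative to the
  virtual position 0 (direction \<open>DRight\<close>) or \<open>length w + 1\<close> (direction \<open>DLeft\<close>), which
  turns the absolute positions into relative ones.\<close>

fun eval_rev :: "dir \<Rightarrow> 'a list \<Rightarrow> 'a ranker \<Rightarrow> nat option" where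
  "eval_rev d0 w [] = Some (if d0 = DRight then 0 else length w + 1)"
| "eval_rev d0 w (p # rs) = Option.bind (eval_rev d0 w rs) (bpos_rel w p)"

lemma eval_rev_le: "eval_rev d0 w rs = Some q \<Longrightarrow> q \<le> length w + 1"
proof (induction rs arbitrary: q)
  case (Cons p rs)
  obtain d a where p: "p = (d, a)" by force
  from Cons.prems obtain q' where "eval_rev d0 w rs = Some q'" "bpos_rel w (d, a) q' = Some q"
    by (cases "eval_rev d0 w rs") (auto simp: p)
  with Cons.IH show ?case
    using bpos_rel_eq_Some by (fastforce simp: occurrences_beyond_def)
qed (auto split: if_splits)

lemma ranker_eval_eq_eval_rev: "r \<noteq> [] \<Longrightarrow> ranker_eval w r = eval_rev (fst (hd r)) w (rev r)"
proof -
  have foldl: "eval_rev d0 w (rev ps @ base) =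
      foldl (\<lambda>acc q. Option.bind acc (bpos_rel w q)) (eval_rev d0 w base) ps" for d0 ps base
    by (induction ps arbitrary: base) auto
  have "eval_rev d0 w [(d0, a)] = bpos_abs w (d0, a)" for d0 a
    by (cases d0) auto
  moreover assume "r \<noteq> []"
  then obtain d0 a ps where "r = (d0, a) # ps" by (metis list.exhaust prod.exhaust)
  ultimately show ?thesis
    using foldl[of d0 ps "[(d0, a)]"] by simp
qed

fun ranker_fo :: "dir \<Rightarrow> 'a ranker \<Rightarrow> var \<Rightarrow> dir \<Rightarrow> 'a fo2" where
  "ranker_fo d0 [] z k = (if k = d0 then FTrue else FFalse)"
| "ranker_fo d0 ((d, a) # rs) z k = (if k = d
     then Ex (other_var z) (And (fo_beyond d (other_var z) z)
            (And (Letter a (other_var z)) (ranker_fo d0 rs (other_var z) d)))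
     else And (Ex (other_var z) (And (Letter a (other_var z)) (ranker_fo d0 rs (other_var z) d)))
            (All (other_var z) (Or (fo_beyond d z (other_var z))
              (Or (NLetter a (other_var z)) (fo_neg (ranker_fo d0 rs (other_var z) d))))))"

lemma free_vars_ranker_fo: "free_vars (ranker_fo d0 rs z k) \<subseteq> {z}"
proof (induction rs arbitrary: z k)
  case (Cons p rs)
  obtain d a where "p = (d, a)" by force
  with Cons.IH[of "other_var z" d] show ?case by auto
qed simp

lemma qdepth_ranker_fo: "qdepth (ranker_fo d0 rs z k) \<le> length rs"
  by (induction rs arbitrary: z k) auto

lemma qblocks_aux_ranker_fo:
  "qblocks_aux (Some QEx) (ranker_fo d0 rs z k) < length (remdups_adj (k # map fst rs)) \<and>
   qblocks_aux (Some QAll) (ranker_fo d0 rs z k) \<le> length (remdups_adj (k # map fst rs))"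
proof (induction rs arbitrary: z k)
  case (Cons p rs)
  obtain d a where "p = (d, a)" by force
  with Cons.IH[of "other_var z" d] show ?case
    by (auto simp: qblocks_aux_fo_neg Suc_le_eq)
qed simp

lemma sat_ranker_fo:
  "v z \<in> {1..length w} \<Longrightarrow>
    sat w v (ranker_fo d0 rs z k) \<longleftrightarrow> (\<exists>p. eval_rev d0 w rs = Some p \<and> beyond k p (v z))"
proof (induction rs arbitrary: v z k)
  case Nil
  then show ?case by (cases d0; cases k) auto
next
  case (Cons p rs)
  obtain d a where p: "p = (d, a)" by force
  define y where "y = other_var z"
  have IH: "sat w (v(y := i)) (ranker_fo d0 rs y d) \<longleftrightarrow>
      (\<exists>q. eval_rev d0 w rs = Some q \<and> beyond d q i)" if "i \<in> {1..length w}" for i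
    using Cons.IH[of "v(y := i)" y d] that by (simp only: fun_upd_same)
  have yz: "y \<noteq> z" by (simp add: y_def)
  show ?case
  proof (cases "eval_rev d0 w rs")
    case None
    with IH show ?thesis by (auto simp: p y_def[symmetric])
  next
    case (Some q)
    have q: "q \<le> length w + 1" using eval_rev_le[OF Some] .
    have IH': "sat w (v(y := i)) (ranker_fo d0 rs y d) \<longleftrightarrow> beyond d q i"
      if "i \<in> {1..length w}" for i
      using IH[OF that] Some by simp
    have eval: "eval_rev d0 w (p # rs) = bpos_rel w (d, a) q" by (simp add: p Some)
    show ?thesis
    proof (cases "k = d")
      case True
      then have "sat w v (ranker_fo d0 (p # rs) z k) \<longleftrightarrow>
          (\<exists>i \<in> occurrences_beyond w d a q. beyond d i (v z))"
        using IH' yz by (auto simp: p y_def[symmetric] occurrences_beyond_def)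
      then show ?thesis
        unfolding eval True bpos_rel_beyond_before_iff[OF q] .
    next
      case False
      then have "sat w v (ranker_fo d0 (p # rs) z k) \<longleftrightarrow>
          occurrences_beyond w d a q \<noteq> {} \<and> (\<forall>i \<in> occurrences_beyond w d a q. beyond d (v z) i)"
        using IH' yz by (auto simp: p y_def[symmetric] occurrences_beyond_def)
      then show ?thesis
        unfolding eval beyond_other_dir[OF False] bpos_rel_beyond_after_iff[OF q] .
    qed
  qed
qed

definition ranker_sentence :: "'a ranker \<Rightarrow> 'a fo2" where
  "ranker_sentence r = (case rev r of
      [] \<Rightarrow> FFalse
    | (d, a) # rs \<Rightarrow> Ex VX (And (Letter a VX) (ranker_fo (fst (hd r)) rs VX d)))"

lemma models_ranker_sentence: "models w (ranker_sentence r) \<longleftrightarrow> ranker_eval w r \<noteq> None"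
proof (cases "rev r")
  case (Cons p rs)
  obtain d a where p: "p = (d, a)" by force
  have "models w (ranker_sentence r) \<longleftrightarrow>
      (\<exists>i\<in>{1..length w}. letter_at w i = a \<and>
        (\<exists>q. eval_rev (fst (hd r)) w rs = Some q \<and> beyond d q i))"
    by (auto simp: ranker_sentence_def models_def Cons p sat_ranker_fo)
  also have "\<dots> \<longleftrightarrow> eval_rev (fst (hd r)) w (rev r) \<noteq> None"
  proof (cases "eval_rev (fst (hd r)) w rs")
    case (Some q)
    have "eval_rev (fst (hd r)) w (rev r) = bpos_rel w (d, a) q" by (simp add: Cons p Some)
    then show ?thesis
      using bpos_rel_eq_None[OF eval_rev_le[OF Some]] Some
      by (auto simp del: bpos_rel.simps simp: occurrences_beyond_def)
  qed (simp add: Cons)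
  also have "\<dots> \<longleftrightarrow> ranker_eval w r \<noteq> None"
    using Cons by (simp add: ranker_eval_eq_eval_rev)
  finally show ?thesis .
qed (simp add: ranker_sentence_def models_def)

lemma sentence_ranker_sentence: "sentence (ranker_sentence r)"
  using free_vars_ranker_fo
  by (fastforce simp: sentence_def ranker_sentence_def split: list.split)

lemma qdepth_ranker_sentence: "qdepth (ranker_sentence r) \<le> length r"
  using qdepth_ranker_fo
  by (fastforce simp: ranker_sentence_def split: list.split dest: arg_cong[of _ _ length])

lemma qblocks_ranker_sentence: "qblocks (ranker_sentence r) \<le> dir_blocks r"
proof (cases "rev r")
  case (Cons p rs)
  obtain d a where p: "p = (d, a)" by force
  have "dir_blocks r = length (remdups_adj (d # map fst rs))"
    using arg_cong[OF Cons, of "\<lambda>r. length (remdups_adj (map fst r))"]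
    by (simp add: dir_blocks_def p rev_map[symmetric])
  then show ?thesis
    using qblocks_aux_ranker_fo[of "fst (hd r)" rs VX d]
    by (simp add: qblocks_def ranker_sentence_def Cons p)
qed (simp add: qblocks_def ranker_sentence_def)

theorem lemma4p3:
  fixes m n :: nat and r :: "('a::finite) ranker"
  assumes "0 < m" and "m \<le> n" and "is_mn_ranker m n r"
  shows "\<exists>\<phi> :: 'a fo2. \<phi> \<in> FO2_mn m n \<and> sentence \<phi> \<and>
           (\<forall>w :: 'a list. models w \<phi> \<longleftrightarrow> ranker_eval w r \<noteq> None)"
proof (intro exI conjI allI)
  show "ranker_sentence r \<in> FO2_mn m n"
    using assms(3) qdepth_ranker_sentence[of r] qblocks_ranker_sentence[of r]
    by (simp add: FO2_mn_def is_mn_ranker_def)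
qed (simp_all add: sentence_ranker_sentence models_ranker_sentence)

end
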